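(* Let $(\mathscr{G},\mathscr{H},\mathscr{F},\iota_v,\varphi_p)$ be an equivariant sheaf of right cosets on a finite-dimensional real vector space $V$, let $\Lambda\subset V$ be a lattice, and let $p,q\ge 2$ be relatively prime natural numbers. Let $s\in\Gamma(V,\mathscr{F})$ and suppose there are $\Lambda$-periodic $A,B\in\Gamma(V,\mathscr{G})$ with $m_p^*(s)=As$ and $m_q^*(s)=Bs$. Then there is a modification $s'$ of $s$ at $0$ which is $\Lambda$-periodic, and this $s'$ also satisfies $m_p^*(s')=As'$ and $m_q^*(s')=Bs'$.
   Context: $V$ carries its classical topology. An equivariant sheaf of right cosets consists of: a sheaf of groups $\mathscr{G}$ on $V$, a subsheaf of subgroups $\mathscr{H}$, and the sheaf $\mathscr{F}=\mathscr{G}/\mathscr{H}$ of right cosets $g\mathscr{H}$ (a sheaf of pointed sets, the distinguished element $0_x$ of $\mathscr{F}_x$ being the trivial coset, with the left action of $\mathscr{G}$), such that: (Dis) for every open $U\subset V$ and $f\in\mathscr{G}(U)$ the set $\{x\in U: f_x\notin\mathscr{H}_x\}$ meets every compact subset of $U$ in a finite set; for every $v\in V$ there are sheaf isomorphisms $\mathscr{G}\simeq t_v^*\mathscr{G}$ ($t_v(x)=x+v$) inducing stalk isomorphisms $\iota_v:\mathscr{G}_x\to\mathscr{G}_{x+v}$ with $\iota_v\circ\iota_u=\iota_{u+v}$; for every real $p\ne0$ there are sheaf isomorphisms $\mathscr{G}\simeq m_p^*\mathscr{G}$ ($m_p(x)=px$) inducing $\varphi_p:\mathscr{G}_x\to\mathscr{G}_{px}$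 with $\varphi_q\circ\varphi_p=\varphi_{pq}$; all these isomorphisms map $\mathscr{H}$ onto $\mathscr{H}$ (hence act on $\mathscr{F}$); and $\iota_{pv}\circ\varphi_p=\varphi_p\circ\iota_v$ as maps $\mathscr{G}_x\to\mathscr{G}_{px+pv}$. For a global section $s$ of $\mathscr{F}$ (or $\mathscr{G}$) set $(m_p^*s)_x=\varphi_p(s_{x/p})$ and $(t_v^*s)_x=\iota_v(s_{x-v})$. A lattice is a discrete subgroup of $V$ spanning $V$; $s$ is $\Lambda$-periodic if $t_\lambda^*s=s$ for all $\lambda\in\Lambda$. A modification of $s$ at $0$ is a global section $s'$ of $\mathscr{F}$ whose restriction to $V\setminus\{0\}$ equals that of $s$. Example: $V=\mathbb{C}$, $\mathscr{G}=GL_r(\mathscr{M})$, $\mathscr{H}=GL_r(\mathscr{O})$ (meromorphic/holomorphic), with $\iota_v,\varphi_p$ given by composition with $t_v^{-1},m_p^{-1}$. *)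

theory Defs
  imports "HOL-Analysis.Analysis" "HOL-Algebra.Coset"
begin

text \<open>Sheaves on V are represented through their etale spaces: the stalk of
  the sheaf of groups at x is the group stk x (all stalks live in one ambient
  type 'g), and sec U f says that the function f is a section over the open set U
  (only the values of f on U matter).\<close>

definition sheaf_of_groups ::
  "('v::topological_space \<Rightarrow> 'g monoid) \<Rightarrow> ('v set \<Rightarrow> ('v \<Rightarrow> 'g) \<Rightarrow> bool) \<Rightarrow> bool" where
  "sheaf_of_groups stk sec \<longleftrightarrow>
     (\<forall>x. group (stk x)) \<and>
     (\<forall>U f. open U \<and> sec U f \<longrightarrow> (\<forall>x\<in>U. f x \<in> carrier (stk x))) \<and>
     (\<forall>U W f. open U \<and> open W \<and> W \<subseteq> U \<and> sec U f \<longrightarrow> sec W f) \<and>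
     (\<forall>U f g. open U \<and> sec U f \<and> (\<forall>x\<in>U. g x = f x) \<longrightarrow> sec U g) \<and>
     (\<forall>U f. open U \<and> (\<forall>x\<in>U. \<exists>W. open W \<and> x \<in> W \<and> W \<subseteq> U \<and> sec W f) \<longrightarrow> sec U f) \<and>
     (\<forall>x g. g \<in> carrier (stk x) \<longrightarrow> (\<exists>W f. open W \<and> x \<in> W \<and> sec W f \<and> f x = g)) \<and>
     (\<forall>U f g x. open U \<and> sec U f \<and> sec U g \<and> x \<in> U \<and> f x = g x \<longrightarrow>
        (\<exists>W. open W \<and> x \<in> W \<and> W \<subseteq> U \<and> (\<forall>y\<in>W. f y = g y))) \<and>
     (\<forall>U. open U \<longrightarrow> sec U (\<lambda>x. \<one>\<^bsub>stk x\<^esub>)) \<and>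
     (\<forall>U f g. open U \<and> sec U f \<and> sec U g \<longrightarrow> sec U (\<lambda>x. f x \<otimes>\<^bsub>stk x\<^esub> g x)) \<and>
     (\<forall>U f. open U \<and> sec U f \<longrightarrow> sec U (\<lambda>x. inv\<^bsub>stk x\<^esub> f x))"

text \<open>A subsheaf of subgroups, given by its stalks H x: the sections of the
  subsheaf over U are the sections of the sheaf with values in H.\<close>

definition subsheaf_of_subgroups ::
  "('v::topological_space \<Rightarrow> 'g monoid) \<Rightarrow> ('v set \<Rightarrow> ('v \<Rightarrow> 'g) \<Rightarrow> bool) \<Rightarrow> ('v \<Rightarrow> 'g set) \<Rightarrow> bool" where
  "subsheaf_of_subgroups stk sec H \<longleftrightarrow>
     (\<forall>x. subgroup (H x) (stk x)) \<and>
     (\<forall>x h. h \<in> H x \<longrightarrow> (\<exists>W f. open W \<and> x \<in> W \<and> sec W f \<and> f x = h \<and> (\<forall>y\<in>W. f y \<in> H y)))"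

text \<open>Sections over U of the quotient sheaf F = G/H (stalk F_x = cosets g H_x):
  locally liftable to sections of G.\<close>

definition coset_section ::
  "('v::topological_space \<Rightarrow> 'g monoid) \<Rightarrow> ('v set \<Rightarrow> ('v \<Rightarrow> 'g) \<Rightarrow> bool) \<Rightarrow> ('v \<Rightarrow> 'g set)
    \<Rightarrow> 'v set \<Rightarrow> ('v \<Rightarrow> 'g set) \<Rightarrow> bool" where
  "coset_section stk sec H U s \<longleftrightarrow>
     (\<forall>x\<in>U. \<exists>W f. open W \<and> x \<in> W \<and> W \<subseteq> U \<and> sec W f \<and>
        (\<forall>y\<in>W. s y = l_coset (stk y) (f y) (H y)))"

definition equivariant_coset_sheaf ::
  "('v::euclidean_space \<Rightarrow> 'g monoid) \<Rightarrow> ('v set \<Rightarrow> ('v \<Rightarrow> 'g) \<Rightarrow> bool) \<Rightarrow> ('v \<Rightarrow> 'g set)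
    \<Rightarrow> ('v \<Rightarrow> 'v \<Rightarrow> 'g \<Rightarrow> 'g) \<Rightarrow> (real \<Rightarrow> 'v \<Rightarrow> 'g \<Rightarrow> 'g) \<Rightarrow> bool" where
  "equivariant_coset_sheaf stk sec H \<iota> \<phi> \<longleftrightarrow>
     sheaf_of_groups stk sec \<and> subsheaf_of_subgroups stk sec H \<and>
     \<comment> \<open>(Dis)\<close>
     (\<forall>U f. open U \<and> sec U f \<longrightarrow>
        (\<forall>K. compact K \<and> K \<subseteq> U \<longrightarrow> finite ({x\<in>U. f x \<notin> H x} \<inter> K))) \<and>
     \<comment> \<open>translations\<close>
     (\<forall>v x. \<iota> v x \<in> iso (stk x) (stk (x + v))) \<and>
     (\<forall>v U f. open U \<and> sec U f \<longrightarrow> sec ((\<lambda>y. y + v) ` U) (\<lambda>y. \<iota> v (y - v) (f (y - v)))) \<and>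
     (\<forall>u v x g. g \<in> carrier (stk x) \<longrightarrow> \<iota> v (x + u) (\<iota> u x g) = \<iota> (u + v) x g) \<and>
     (\<forall>v x. \<iota> v x ` H x = H (x + v)) \<and>
     \<comment> \<open>dilations\<close>
     (\<forall>p x. p \<noteq> 0 \<longrightarrow> \<phi> p x \<in> iso (stk x) (stk (p *\<^sub>R x))) \<and>
     (\<forall>p U f. p \<noteq> 0 \<and> open U \<and> sec U f \<longrightarrow>
        sec ((\<lambda>y. p *\<^sub>R y) ` U) (\<lambda>y. \<phi> p (inverse p *\<^sub>R y) (f (inverse p *\<^sub>R y)))) \<and>
     (\<forall>p q x g. p \<noteq> 0 \<and> q \<noteq> 0 \<and> g \<in> carrier (stk x) \<longrightarrow>
        \<phi> q (p *\<^sub>R x) (\<phi> p x g) = \<phi> (p * q) x g) \<and>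
     (\<forall>p x. p \<noteq> 0 \<longrightarrow> \<phi> p x ` H x = H (p *\<^sub>R x)) \<and>
     \<comment> \<open>compatibility\<close>
     (\<forall>p v x g. p \<noteq> 0 \<and> g \<in> carrier (stk x) \<longrightarrow>
        \<iota> (p *\<^sub>R v) (p *\<^sub>R x) (\<phi> p x g) = \<phi> p (x + v) (\<iota> v x g))"

definition lattice :: "'v::euclidean_space set \<Rightarrow> bool" where
  "lattice L \<longleftrightarrow> 0 \<in> L \<and> (\<forall>a\<in>L. \<forall>b\<in>L. a - b \<in> L) \<and>
     (\<forall>x\<in>L. \<exists>e>0. \<forall>y\<in>L. dist y x < e \<longrightarrow> y = x) \<and> span L = UNIV"

definition pull_m_F :: "(real \<Rightarrow> 'v::real_vector \<Rightarrow> 'g \<Rightarrow> 'g) \<Rightarrow> real \<Rightarrow> ('v \<Rightarrow> 'g set) \<Rightarrow> 'v \<Rightarrow> 'g set" where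
  "pull_m_F \<phi> p s = (\<lambda>x. \<phi> p (inverse p *\<^sub>R x) ` s (inverse p *\<^sub>R x))"

definition pull_t_F :: "('v::real_vector \<Rightarrow> 'v \<Rightarrow> 'g \<Rightarrow> 'g) \<Rightarrow> 'v \<Rightarrow> ('v \<Rightarrow> 'g set) \<Rightarrow> 'v \<Rightarrow> 'g set" where
  "pull_t_F \<iota> v s = (\<lambda>x. \<iota> v (x - v) ` s (x - v))"

definition pull_t_G :: "('v::real_vector \<Rightarrow> 'v \<Rightarrow> 'g \<Rightarrow> 'g) \<Rightarrow> 'v \<Rightarrow> ('v \<Rightarrow> 'g) \<Rightarrow> 'v \<Rightarrow> 'g" where
  "pull_t_G \<iota> v A = (\<lambda>x. \<iota> v (x - v) (A (x - v)))"

definition act_F :: "('v \<Rightarrow> 'g monoid) \<Rightarrow> ('v \<Rightarrow> 'g) \<Rightarrow> ('v \<Rightarrow> 'g set) \<Rightarrow> 'v \<Rightarrow> 'g set" where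
  "act_F stk A s = (\<lambda>x. l_coset (stk x) (A x) (s x))"

end

(*
  A section s of F is L-periodic iff it is translation-related at y and y' (s y' is the
  iota-translate of s y) whenever y' - y lies in L. As A is periodic, the equation m_p^* s = A s
  makes s translation-related at y, y' iff it is so at y/p, y'/p. By (Dis) every section of F
  is the trivial coset on a punctured neighbourhood of each point, and A lies outside H only on
  finitely many cosets of L; following a nontrivial value of s down the sequence y, y/p, y/p^2, ...
  to such a point shows that for nonzero y the whole coset y/p^n + L is trivial for large n,
  so s is translation-related at y and y + p^n l. Since p^m and q^n are coprime, Bezout links
  any two nonzero points of a coset of L by one p-step and one q-step, so s is periodic away
  from 0. Redefining s at 0 as the translate of s at a nonzero lattice point mu gives a periodic
  section, and both equations still hold at 0 because they are transported there from p mu.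
*)
theory Submission
  imports Defs "HOL-Algebra.Left_Coset"
begin

section \<open>Lattices\<close>

lemma lattice_zero: "lattice L \<Longrightarrow> 0 \<in> L"
  unfolding lattice_def by simp

lemma lattice_diff: "lattice L \<Longrightarrow> a \<in> L \<Longrightarrow> b \<in> L \<Longrightarrow> a - b \<in> L"
  unfolding lattice_def by simp

lemma lattice_minus: "lattice L \<Longrightarrow> a \<in> L \<Longrightarrow> - a \<in> L"
  using lattice_diff[of L 0 a] by (simp add: lattice_zero)

lemma lattice_add: "lattice L \<Longrightarrow> a \<in> L \<Longrightarrow> b \<in> L \<Longrightarrow> a + b \<in> L"
  using lattice_diff[of L a "- b"] by (simp add: lattice_minus)

lemma lattice_of_nat_scaleR: "lattice L \<Longrightarrow> a \<in> L \<Longrightarrow> of_nat n *\<^sub>R a \<in> L"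
  by (induction n) (simp_all add: lattice_zero lattice_add algebra_simps)

lemma lattice_of_int_scaleR:
  assumes "lattice L" "a \<in> L" shows "of_int k *\<^sub>R a \<in> L"
proof (cases "k \<ge> 0")
  case True
  then show ?thesis using lattice_of_nat_scaleR[OF assms, of "nat k"] by simp
next
  case False
  then show ?thesis using lattice_minus[OF assms(1) lattice_of_nat_scaleR[OF assms, of "nat (- k)"]] by simp
qed

lemma lattice_sum:
  assumes "lattice L" shows "finite B \<Longrightarrow> (\<And>b. b \<in> B \<Longrightarrow> f b \<in> L) \<Longrightarrow> sum f B \<in> L"
  by (induction B rule: finite_induct) (simp_all add: assms lattice_zero lattice_add)

lemma lattice_nonzero:
  assumes "lattice (L :: 'v::euclidean_space set)" shows "\<exists>l\<in>L. l \<noteq> 0"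
proof (rule ccontr)
  assume "\<not> ?thesis"
  then have "span L \<subseteq> {0}" by (metis span_empty span_mono subsetI insertI1 span_insert_0)
  then show False using assms nonzero_Basis nonempty_Basis unfolding lattice_def by blast
qed

lemma lattice_covering:
  assumes L: "lattice (L :: 'v::euclidean_space set)"
  shows "\<exists>R. \<forall>v. \<exists>l\<in>L. norm (v - l) \<le> R"
proof -
  obtain B where B: "B \<subseteq> L" "independent B" "L \<subseteq> span B" by (rule maximal_independent_subset)
  have "finite B" using B(2) by (rule finiteI_independent)
  have "span B = UNIV" using span_mono[OF B(3)] L unfolding lattice_def by (auto simp: span_span)
  have "\<exists>l\<in>L. norm (v - l) \<le> (\<Sum>b\<in>B. norm b)" for v
  proof -
    obtain u where u: "v = (\<Sum>b\<in>B. u b *\<^sub>R b)"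
      using \<open>span B = UNIV\<close> span_finite[OF \<open>finite B\<close>] by auto
    define l where "l = (\<Sum>b\<in>B. of_int \<lfloor>u b\<rfloor> *\<^sub>R b)"
    have "l \<in> L"
      unfolding l_def using B(1) by (intro lattice_sum[OF L \<open>finite B\<close>] lattice_of_int_scaleR[OF L]) auto
    have "norm (v - l) = norm (\<Sum>b\<in>B. frac (u b) *\<^sub>R b)"
      unfolding u l_def frac_def by (simp add: sum_subtractf scaleR_diff_left)
    also have "\<dots> \<le> (\<Sum>b\<in>B. norm b)"
      by (rule order_trans[OF norm_sum sum_mono]) (simp add: frac_lt_1 less_imp_le mult_left_le_one_le)
    finally show ?thesis using \<open>l \<in> L\<close> by blast
  qed
  then show ?thesis by blast
qed

lemma lattice_finite_representatives:
  assumes L: "lattice (L :: 'v::euclidean_space set)"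
    and invariant: "\<And>a l. a \<in> D \<Longrightarrow> l \<in> L \<Longrightarrow> a + l \<in> D"
    and locally_finite: "\<And>K. compact K \<Longrightarrow> finite (D \<inter> K)"
  shows "\<exists>F. finite F \<and> (\<forall>a\<in>D. \<exists>f\<in>F. a - f \<in> L)"
proof -
  obtain R where R: "\<And>v. \<exists>l\<in>L. norm (v - l) \<le> R" using lattice_covering[OF L] by blast
  have "\<exists>f\<in>D \<inter> cball 0 R. a - f \<in> L" if "a \<in> D" for a
  proof -
    obtain l where "l \<in> L" "norm (a - l) \<le> R" using R by blast
    then have "a + - l \<in> D \<inter> cball 0 R"
      using invariant[OF that lattice_minus[OF L]] by (simp add: dist_norm norm_minus_commute)
    then show ?thesis using \<open>l \<in> L\<close> by force
  qed
  then show ?thesis using locally_finite[OF compact_cball] by blast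
qed

lemma lattice_shrinking_eq_0:
  assumes L: "lattice L" and "P \<ge> (2::nat)" and shrunk: "\<And>n. w /\<^sub>R real P ^ n \<in> L"
  shows "w = 0"
proof -
  have "\<exists>e>0. \<forall>y\<in>L. dist y 0 < e \<longrightarrow> y = 0"
    using L unfolding lattice_def by blast
  then obtain e where e: "e > 0" "\<And>y. y \<in> L \<Longrightarrow> norm y < e \<Longrightarrow> y = 0"
    by auto
  obtain n where n: "norm w / e < real P ^ n"
    using real_arch_pow[of "real P" "norm w / e"] \<open>P \<ge> 2\<close> by auto
  have "norm (w /\<^sub>R real P ^ n) < e"
    using n e(1) \<open>P \<ge> 2\<close> by (simp add: field_simps)
  then show ?thesis using e(2)[OF shrunk] \<open>P \<ge> 2\<close> by simp
qed

lemma lattice_orbit_multiple_eq_0: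
  assumes L: "lattice L" and P: "P \<ge> (2::nat)" and "of_int N *\<^sub>R f \<in> L"
    and orbit: "\<And>m. y /\<^sub>R real P ^ m - real P ^ k m *\<^sub>R f \<in> L"
  shows "N = 0 \<or> y = 0"
proof -
  have "(of_int N *\<^sub>R y) /\<^sub>R real P ^ m \<in> L" for m
  proof -
    have "of_int N *\<^sub>R (y /\<^sub>R real P ^ m - real P ^ k m *\<^sub>R f) + of_nat (P ^ k m) *\<^sub>R (of_int N *\<^sub>R f) \<in> L"
      using lattice_add[OF L lattice_of_int_scaleR[OF L orbit] lattice_of_nat_scaleR[OF L assms(3)]] .
    also have "of_int N *\<^sub>R (y /\<^sub>R real P ^ m - real P ^ k m *\<^sub>R f) + of_nat (P ^ k m) *\<^sub>R (of_int N *\<^sub>R f)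
        = (of_int N *\<^sub>R y) /\<^sub>R real P ^ m"
      by (simp add: algebra_simps)
    finally show ?thesis .
  qed
  then have "of_int N *\<^sub>R y = 0" by (rule lattice_shrinking_eq_0[OF L P])
  then show ?thesis by simp
qed

lemma lattice_not_always_in_orbit:
  assumes L: "lattice L" and P: "P \<ge> (2::nat)" and "y \<noteq> 0"
  shows "\<not> (\<forall>n. \<exists>k. y /\<^sub>R real P ^ n - real P ^ k *\<^sub>R f \<in> L)"
proof
  assume "\<forall>n. \<exists>k. y /\<^sub>R real P ^ n - real P ^ k *\<^sub>R f \<in> L"
  then obtain k where k: "\<And>n. y /\<^sub>R real P ^ n - real P ^ k n *\<^sub>R f \<in> L"
    by metis
  \<comment> \<open>Comparing consecutive n yields a nonzero integer N with N f in L, unless k n = k (Suc n) + 1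
    for all n, which is impossible.\<close>
  have "\<not> (\<forall>n. k n = Suc (k (Suc n)))"
  proof
    assume descent: "\<forall>n. k n = Suc (k (Suc n))"
    have "k 0 = k n + n" for n
    proof (induction n)
      case (Suc n)
      then show ?case using descent[rule_format, of n] by simp
    qed simp
    from this[of "Suc (k 0)"] show False by simp
  qed
  then obtain n where n: "k n \<noteq> Suc (k (Suc n))" by blast
  define N :: int where "N = int P ^ Suc (k (Suc n)) - int P ^ k n"
  have "N \<noteq> 0"
    using n P power_inject_exp[of "int P" "Suc (k (Suc n))" "k n"] unfolding N_def by simp
  have "real P *\<^sub>R (y /\<^sub>R real P ^ Suc n - real P ^ k (Suc n) *\<^sub>R f)
      = y /\<^sub>R real P ^ n - real P ^ Suc (k (Suc n)) *\<^sub>R f"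
    using P by (simp add: scaleR_diff_right)
  then have "y /\<^sub>R real P ^ n - real P ^ Suc (k (Suc n)) *\<^sub>R f \<in> L"
    using lattice_of_nat_scaleR[OF L k, of P "Suc n"] by simp
  from lattice_diff[OF L k[of n] this]
  have Nf: "of_int N *\<^sub>R f \<in> L"
    unfolding N_def by (simp add: algebra_simps)
  show False
    using lattice_orbit_multiple_eq_0[OF L P Nf k] \<open>N \<noteq> 0\<close> \<open>y \<noteq> 0\<close> by blast
qed

lemma lattice_eventually_not_in_orbit:
  assumes L: "lattice L" and P: "P \<ge> (2::nat)" and "y \<noteq> 0"
  shows "\<forall>\<^sub>F n in sequentially. \<forall>k. y /\<^sub>R real P ^ n - real P ^ k *\<^sub>R f \<notin> L"
proof -
  obtain n0 where n0: "\<And>k. y /\<^sub>R real P ^ n0 - real P ^ k *\<^sub>R f \<notin> L"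
    using lattice_not_always_in_orbit[OF assms] by blast
  have "y /\<^sub>R real P ^ (n0 + d) - real P ^ k *\<^sub>R f \<notin> L" for d k
  proof
    assume "y /\<^sub>R real P ^ (n0 + d) - real P ^ k *\<^sub>R f \<in> L"
    from lattice_of_nat_scaleR[OF L this, of "P ^ d"]
    have "real P ^ d *\<^sub>R (y /\<^sub>R real P ^ (n0 + d) - real P ^ k *\<^sub>R f) \<in> L" by simp
    also have "real P ^ d *\<^sub>R (y /\<^sub>R real P ^ (n0 + d) - real P ^ k *\<^sub>R f)
        = y /\<^sub>R real P ^ n0 - real P ^ (k + d) *\<^sub>R f"
      using P by (simp add: scaleR_diff_right power_add mult.commute)
    finally show False using n0 by blast
  qed
  then show ?thesis unfolding eventually_sequentially by (metis le_add_diff_inverse)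
qed

section \<open>Equivariant sheaves of cosets\<close>

lemma (in group) l_coset_cancel:
  assumes "a \<in> carrier G" "X \<subseteq> carrier G" "Y \<subseteq> carrier G" "a <#\<^bsub>G\<^esub> X = a <#\<^bsub>G\<^esub> Y"
  shows "X = Y"
proof -
  have "(inv a \<otimes> a) <#\<^bsub>G\<^esub> X = (inv a \<otimes> a) <#\<^bsub>G\<^esub> Y"
    using assms lcos_m_assoc[of _ "inv a" a] by (metis inv_closed)
  then show ?thesis using assms by (simp add: lcos_mult_one)
qed

lemma (in group) l_coset_eq_subgroup_iff:
  assumes "subgroup K G" "g \<in> carrier G"
  shows "g <#\<^bsub>G\<^esub> K = K \<longleftrightarrow> g \<in> K"
  using assms lcos_self coset_join3 by metis

locale equivariant_sheaf =
  fixes stk :: "'v::euclidean_space \<Rightarrow> 'g monoid"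
    and sec :: "'v set \<Rightarrow> ('v \<Rightarrow> 'g) \<Rightarrow> bool"
    and H :: "'v \<Rightarrow> 'g set"
    and \<iota> :: "'v \<Rightarrow> 'v \<Rightarrow> 'g \<Rightarrow> 'g"
    and \<phi> :: "real \<Rightarrow> 'v \<Rightarrow> 'g \<Rightarrow> 'g"
  assumes equivariant: "equivariant_coset_sheaf stk sec H \<iota> \<phi>"
begin

lemma sheaf: "sheaf_of_groups stk sec"
  using equivariant unfolding equivariant_coset_sheaf_def by (elim conjE)

lemma group_stalk: "group (stk x)"
  using sheaf unfolding sheaf_of_groups_def by (elim conjE) meson

lemma sec_in_carrier: "open U \<Longrightarrow> sec U f \<Longrightarrow> x \<in> U \<Longrightarrow> f x \<in> carrier (stk x)"
  using sheaf unfolding sheaf_of_groups_def by (elim conjE) meson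

lemma sec_restrict: "open U \<Longrightarrow> open W \<Longrightarrow> W \<subseteq> U \<Longrightarrow> sec U f \<Longrightarrow> sec W f"
  using sheaf unfolding sheaf_of_groups_def by (elim conjE) meson

lemma ex_sec_through: "g \<in> carrier (stk x) \<Longrightarrow> \<exists>W f. open W \<and> x \<in> W \<and> sec W f \<and> f x = g"
  using sheaf unfolding sheaf_of_groups_def by (elim conjE) meson

lemma subgroup_H: "subgroup (H x) (stk x)"
  using equivariant unfolding equivariant_coset_sheaf_def subsheaf_of_subgroups_def by (elim conjE) meson

lemma H_subset_carrier: "H x \<subseteq> carrier (stk x)"
  using subgroup.subset[OF subgroup_H] .

lemma sec_finite_off_H:
  "open U \<Longrightarrow> sec U f \<Longrightarrow> compact K \<Longrightarrow> K \<subseteq> U \<Longrightarrow> finite ({x\<in>U. f x \<notin> H x} \<inter> K)"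
  using equivariant unfolding equivariant_coset_sheaf_def by (elim conjE) meson

lemma iota_iso: "\<iota> v x \<in> iso (stk x) (stk (x + v))"
  using equivariant unfolding equivariant_coset_sheaf_def by (elim conjE) meson

lemma iota_add: "g \<in> carrier (stk x) \<Longrightarrow> \<iota> v (x + u) (\<iota> u x g) = \<iota> (u + v) x g"
  using equivariant unfolding equivariant_coset_sheaf_def by (elim conjE) meson

lemma iota_image_H: "\<iota> v x ` H x = H (x + v)"
  using equivariant unfolding equivariant_coset_sheaf_def by (elim conjE) meson

lemma phi_iso: "p \<noteq> 0 \<Longrightarrow> \<phi> p x \<in> iso (stk x) (stk (p *\<^sub>R x))"
  using equivariant unfolding equivariant_coset_sheaf_def by (elim conjE) meson

lemma phi_image_H: "p \<noteq> 0 \<Longrightarrow> \<phi> p x ` H x = H (p *\<^sub>R x)"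
  using equivariant unfolding equivariant_coset_sheaf_def by (elim conjE) meson

lemma phi_iota:
  "p \<noteq> 0 \<Longrightarrow> g \<in> carrier (stk x) \<Longrightarrow> \<iota> (p *\<^sub>R v) (p *\<^sub>R x) (\<phi> p x g) = \<phi> p (x + v) (\<iota> v x g)"
  using equivariant unfolding equivariant_coset_sheaf_def by (elim conjE) meson

lemma iota_hom: "\<iota> v x \<in> hom (stk x) (stk (x + v))"
  using iota_iso unfolding iso_def by simp

lemma iota_inj: "inj_on (\<iota> v x) (carrier (stk x))"
  using iota_iso unfolding iso_def bij_betw_def by simp

lemma phi_inj: "p \<noteq> 0 \<Longrightarrow> inj_on (\<phi> p x) (carrier (stk x))"
  using phi_iso unfolding iso_def bij_betw_def by simp

lemma iota_in_carrier: "g \<in> carrier (stk x) \<Longrightarrow> \<iota> v x g \<in> carrier (stk (x + v))"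
  using hom_in_carrier[OF iota_hom] .

lemma iota_zero: "g \<in> carrier (stk x) \<Longrightarrow> \<iota> 0 x g = g"
  using iota_add[of g x 0 0] iota_in_carrier[of g x 0] inj_onD[OF iota_inj[of 0 x]] by simp

lemma iota_iota: "g \<in> carrier (stk x) \<Longrightarrow> \<iota> (z - y) y (\<iota> (y - x) x g) = \<iota> (z - x) x g"
  using iota_add[where x = x and u = "y - x" and v = "z - y"] by simp

lemma iota_image_iota_image:
  "X \<subseteq> carrier (stk x) \<Longrightarrow> \<iota> (z - y) y ` \<iota> (y - x) x ` X = \<iota> (z - x) x ` X"
  by (auto simp: image_image subset_iff iota_iota intro!: image_cong)

lemma iota_zero_image: "X \<subseteq> carrier (stk x) \<Longrightarrow> \<iota> 0 x ` X = X"
  by (auto simp: subset_iff iota_zero image_iff)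

lemma iota_image_l_coset:
  "g \<in> carrier (stk x) \<Longrightarrow> X \<subseteq> carrier (stk x) \<Longrightarrow>
    \<iota> v x ` (g <#\<^bsub>stk x\<^esub> X) = \<iota> v x g <#\<^bsub>stk (x + v)\<^esub> \<iota> v x ` X"
  using coset_hom(1)[OF iota_hom] by blast

lemma phi_image_iota_image:
  assumes "p \<noteq> 0" "X \<subseteq> carrier (stk w)"
  shows "\<phi> p w' ` \<iota> (w' - w) w ` X = \<iota> (p *\<^sub>R w' - p *\<^sub>R w) (p *\<^sub>R w) ` \<phi> p w ` X"
  using assms phi_iota[OF assms(1), where x = w and v = "w' - w"]
  by (auto simp: image_image subset_iff scaleR_diff_right intro!: image_cong)

lemma iota_image_subset: "X \<subseteq> carrier (stk x) \<Longrightarrow> \<iota> (y - x) x ` X \<subseteq> carrier (stk y)"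
  using iota_in_carrier[where x = x and v = "y - x"] by auto

definition is_coset :: "'v \<Rightarrow> 'g set \<Rightarrow> bool" where
  "is_coset x X \<longleftrightarrow> (\<exists>g\<in>carrier (stk x). X = g <#\<^bsub>stk x\<^esub> H x)"

lemma is_coset_subset: "is_coset x X \<Longrightarrow> X \<subseteq> carrier (stk x)"
  unfolding is_coset_def using group.l_coset_subset_G[OF group_stalk H_subset_carrier] by blast

lemma coset_section_lift:
  "coset_section stk sec H U s \<Longrightarrow> x \<in> U \<Longrightarrow>
    \<exists>W f. open W \<and> x \<in> W \<and> W \<subseteq> U \<and> sec W f \<and> (\<forall>y\<in>W. s y = f y <#\<^bsub>stk y\<^esub> H y)"
  unfolding coset_section_def by blast

lemma coset_section_is_coset: "coset_section stk sec H U s \<Longrightarrow> x \<in> U \<Longrightarrow> is_coset x (s x)"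
  unfolding is_coset_def by (metis coset_section_lift sec_in_carrier)

lemma is_coset_iota_image: "is_coset x X \<Longrightarrow> is_coset (x + v) (\<iota> v x ` X)"
  unfolding is_coset_def
  by (metis iota_image_l_coset iota_image_H iota_in_carrier H_subset_carrier)

lemma l_coset_H_eq_H_iff: "g \<in> carrier (stk x) \<Longrightarrow> g <#\<^bsub>stk x\<^esub> H x = H x \<longleftrightarrow> g \<in> H x"
  using group.l_coset_eq_subgroup_iff[OF group_stalk subgroup_H] .

definition transl_related :: "('v \<Rightarrow> 'g set) \<Rightarrow> 'v \<Rightarrow> 'v \<Rightarrow> bool" where
  "transl_related t y y' \<longleftrightarrow> t y' = \<iota> (y' - y) y ` t y"

lemma transl_related_refl: "t y \<subseteq> carrier (stk y) \<Longrightarrow> transl_related t y y"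
  unfolding transl_related_def by (simp add: iota_zero_image)

lemma transl_related_trans:
  assumes "t a \<subseteq> carrier (stk a)" "transl_related t a b" "transl_related t b c"
  shows "transl_related t a c"
  using assms iota_image_iota_image[OF assms(1), of c b]
  unfolding transl_related_def by simp

lemma transl_related_sym:
  assumes "t y \<subseteq> carrier (stk y)" "transl_related t y y'"
  shows "transl_related t y' y"
  using assms iota_image_iota_image[OF assms(1), of y y']
  unfolding transl_related_def by (simp add: iota_zero_image)

lemma transl_related_H: "t y = H y \<Longrightarrow> t y' = H y' \<Longrightarrow> transl_related t y y'"
  unfolding transl_related_def by (metis iota_image_H diff_add_cancel add.commute)

lemma pull_t_F_eq_iff: "pull_t_F \<iota> l t = t \<longleftrightarrow> (\<forall>y. transl_related t (y - l) y)"
  unfolding pull_t_F_def transl_related_def fun_eq_iff by (simp add: eq_commute)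

lemma sec_eventually_in_H:
  assumes "open W" "sec W f" "x \<in> W"
  shows "\<forall>\<^sub>F y in at x. f y \<in> H y"
proof -
  obtain e where "e > 0" "cball x e \<subseteq> W"
    using assms(1,3) open_contains_cball by blast
  then have "ball x e \<subseteq> W" by auto
  define S where "S = {y\<in>W. f y \<notin> H y} \<inter> cball x e"
  have "finite S"
    unfolding S_def using sec_finite_off_H[OF assms(1,2) compact_cball \<open>cball x e \<subseteq> W\<close>] .
  then have "\<forall>\<^sub>F y in at x. y \<notin> S"
    using islimpt_finite islimpt_iff_eventually by blast
  moreover have "\<forall>\<^sub>F y in at x. y \<in> ball x e"
    using eventually_at_ball[OF \<open>e > 0\<close>] by (rule eventually_mono) simp
  ultimately show ?thesis
    by eventually_elim (use \<open>ball x e \<subseteq> W\<close> in \<open>auto simp: S_def\<close>)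
qed

lemma coset_section_eventually_H:
  assumes "coset_section stk sec H U s" "x \<in> U"
  shows "\<forall>\<^sub>F y in at x. s y = H y"
proof -
  obtain W f where W: "open W" "x \<in> W" "sec W f" "\<forall>y\<in>W. s y = f y <#\<^bsub>stk y\<^esub> H y"
    using coset_section_lift[OF assms] by blast
  show ?thesis
    using sec_eventually_in_H[OF W(1,3,2)] eventually_at_in_open'[OF W(1,2)]
    by eventually_elim (use W in \<open>simp add: l_coset_H_eq_H_iff sec_in_carrier\<close>)
qed


lemma coset_section_lift_through:
  assumes s: "coset_section stk sec H U s" and "x0 \<in> U" and X: "is_coset x0 X"
  shows "\<exists>W f. open W \<and> x0 \<in> W \<and> W \<subseteq> U \<and> sec W f \<and> X = f x0 <#\<^bsub>stk x0\<^esub> H x0 \<and>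
    (\<forall>y\<in>W - {x0}. s y = f y <#\<^bsub>stk y\<^esub> H y)"
proof -
  obtain g where g: "g \<in> carrier (stk x0)" "X = g <#\<^bsub>stk x0\<^esub> H x0"
    using X unfolding is_coset_def by blast
  obtain W f where W: "open W" "x0 \<in> W" "sec W f" "f x0 = g"
    using ex_sec_through[OF g(1)] by blast
  obtain W' where W': "open W'" "x0 \<in> W'" "W' \<subseteq> U"
    using coset_section_lift[OF s \<open>x0 \<in> U\<close>] by blast
  \<comment> \<open>Off a discrete set both s and the coset of f are trivial, so they agree near x0.\<close>
  have "\<forall>\<^sub>F y in at x0. s y = H y"
    using coset_section_eventually_H[OF s \<open>x0 \<in> U\<close>] .
  moreover note sec_eventually_in_H[OF W(1,3,2)] eventually_at_in_open'[OF W(1,2)]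
  ultimately have "\<forall>\<^sub>F y in at x0. s y = H y \<and> f y \<in> H y \<and> y \<in> W"
    by eventually_elim blast
  then obtain T where T: "open T" "x0 \<in> T" "\<And>y. y \<in> T \<Longrightarrow> y \<noteq> x0 \<Longrightarrow> s y = H y \<and> f y \<in> H y \<and> y \<in> W"
    unfolding eventually_at_topological by blast
  have "s y = f y <#\<^bsub>stk y\<^esub> H y" if "y \<in> T \<inter> W \<inter> W' - {x0}" for y
    using that T(3)[of y] l_coset_H_eq_H_iff[OF sec_in_carrier[OF W(1,3)], of y] by auto
  moreover have "open (T \<inter> W \<inter> W')"
    using T(1) W(1) W'(1) by auto
  moreover have "sec (T \<inter> W \<inter> W') f"
    using sec_restrict[OF W(1) \<open>open (T \<inter> W \<inter> W')\<close> _ W(3)] by blast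
  ultimately show ?thesis
    using T(2) W(2,4) W'(2,3) g(2) by (intro exI[of _ "T \<inter> W \<inter> W'"] exI[of _ f]) blast
qed

lemma coset_section_update:
  assumes s: "coset_section stk sec H U s" and X: "is_coset x0 X"
  shows "coset_section stk sec H U (s(x0 := X))"
  unfolding coset_section_def
proof
  fix x assume "x \<in> U"
  show "\<exists>W f. open W \<and> x \<in> W \<and> W \<subseteq> U \<and> sec W f \<and> (\<forall>y\<in>W. (s(x0 := X)) y = f y <#\<^bsub>stk y\<^esub> H y)"
  proof (cases "x = x0")
    case False
    obtain W f where W: "open W" "x \<in> W" "W \<subseteq> U" "sec W f" "\<forall>y\<in>W. s y = f y <#\<^bsub>stk y\<^esub> H y"
      using coset_section_lift[OF s \<open>x \<in> U\<close>] by blast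
    then show ?thesis
      using False sec_restrict[OF W(1) open_delete[OF W(1)] _ W(4)]
      by (intro exI[of _ "W - {x0}"] exI[of _ f]) (auto simp: open_delete)
  next
    case True
    then show ?thesis
      using coset_section_lift_through[OF s \<open>x \<in> U\<close>] X by fastforce
  qed
qed

end

section \<open>Sections satisfying a dilation equation\<close>

locale periodic_dilation = equivariant_sheaf +
  fixes L P C
  assumes lattice: "lattice L" and P_ge_2: "P \<ge> (2::nat)"
    and C_sec: "sec UNIV C" and C_periodic: "\<forall>l\<in>L. pull_t_G \<iota> l C = C"
begin

lemma P_nonzero: "real P \<noteq> 0"
  using P_ge_2 by simp

lemma C_in_carrier: "C x \<in> carrier (stk x)"
  using sec_in_carrier[OF open_UNIV C_sec] by simp

lemma iota_C: "l \<in> L \<Longrightarrow> \<iota> l y (C y) = C (y + l)"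
  using C_periodic fun_cong[of "pull_t_G \<iota> l C" C "y + l"] unfolding pull_t_G_def by simp

lemma C_notin_H_translate:
  assumes "l \<in> L" "C a \<notin> H a" shows "C (a + l) \<notin> H (a + l)"
proof -
  have "\<iota> l a (C a) \<notin> \<iota> l a ` H a"
    using assms(2) inj_on_image_mem_iff[OF iota_inj C_in_carrier H_subset_carrier] by blast
  then show ?thesis using iota_C[OF assms(1)] iota_image_H by simp
qed

lemma C_notin_H_finite_representatives: "\<exists>F. finite F \<and> (\<forall>a. C a \<notin> H a \<longrightarrow> (\<exists>f\<in>F. a - f \<in> L))"
proof -
  have "\<exists>F. finite F \<and> (\<forall>a\<in>{a. C a \<notin> H a}. \<exists>f\<in>F. a - f \<in> L)"
  proof (rule lattice_finite_representatives[OF lattice])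
    show "a + l \<in> {a. C a \<notin> H a}" if "a \<in> {a. C a \<notin> H a}" "l \<in> L" for a l
      using that C_notin_H_translate by blast
    show "finite ({a. C a \<notin> H a} \<inter> K)" if "compact K" for K
      using sec_finite_off_H[OF open_UNIV C_sec that subset_UNIV] by simp
  qed
  then show ?thesis by blast
qed

definition dilation_eq_at where
  "dilation_eq_at t y \<longleftrightarrow> \<phi> (real P) (y /\<^sub>R real P) ` t (y /\<^sub>R real P) = C y <#\<^bsub>stk y\<^esub> t y"

lemma pull_m_F_eq_act_F_iff: "pull_m_F \<phi> (real P) t = act_F stk C t \<longleftrightarrow> (\<forall>y. dilation_eq_at t y)"
  unfolding pull_m_F_def act_F_def dilation_eq_at_def fun_eq_iff ..

lemma dilation_eq_iota_image:
  assumes "y' - y \<in> L" and t: "\<And>x. t x \<subseteq> carrier (stk x)" and "dilation_eq_at t y"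
  shows "\<phi> (real P) (y' /\<^sub>R real P) ` \<iota> (y' /\<^sub>R real P - y /\<^sub>R real P) (y /\<^sub>R real P) ` t (y /\<^sub>R real P)
    = C y' <#\<^bsub>stk y'\<^esub> \<iota> (y' - y) y ` t y"
proof -
  have "\<phi> (real P) (y' /\<^sub>R real P) ` \<iota> (y' /\<^sub>R real P - y /\<^sub>R real P) (y /\<^sub>R real P) ` t (y /\<^sub>R real P)
      = \<iota> (y' - y) y ` \<phi> (real P) (y /\<^sub>R real P) ` t (y /\<^sub>R real P)"
    using phi_image_iota_image[OF P_nonzero t[of "y /\<^sub>R real P"], of "y' /\<^sub>R real P"] P_ge_2 by simp
  also have "\<dots> = \<iota> (y' - y) y ` (C y <#\<^bsub>stk y\<^esub> t y)"
    using \<open>dilation_eq_at t y\<close> unfolding dilation_eq_at_def by simp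
  also have "\<dots> = C y' <#\<^bsub>stk y'\<^esub> \<iota> (y' - y) y ` t y"
    using iota_image_l_coset[OF C_in_carrier t, of "y' - y"] iota_C[OF \<open>y' - y \<in> L\<close>, of y] by simp
  finally show ?thesis .
qed

lemma transl_related_iff_scaled:
  assumes "y' - y \<in> L" and t: "\<And>x. t x \<subseteq> carrier (stk x)"
    and "dilation_eq_at t y" "dilation_eq_at t y'"
  shows "transl_related t y y' \<longleftrightarrow> transl_related t (y /\<^sub>R real P) (y' /\<^sub>R real P)"
proof -
  note image = dilation_eq_iota_image[OF assms(1-3)]
  have "transl_related t y y' \<longleftrightarrow> C y' <#\<^bsub>stk y'\<^esub> t y' = C y' <#\<^bsub>stk y'\<^esub> \<iota> (y' - y) y ` t y"
    unfolding transl_related_def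
    using group.l_coset_cancel[OF group_stalk C_in_carrier t[of y'] iota_image_subset[OF t[of y], of y']]
    by auto
  also have "\<dots> \<longleftrightarrow> \<phi> (real P) (y' /\<^sub>R real P) ` t (y' /\<^sub>R real P)
      = \<phi> (real P) (y' /\<^sub>R real P) ` \<iota> (y' /\<^sub>R real P - y /\<^sub>R real P) (y /\<^sub>R real P) ` t (y /\<^sub>R real P)"
    using \<open>dilation_eq_at t y'\<close> image unfolding dilation_eq_at_def by simp
  also have "\<dots> \<longleftrightarrow> transl_related t (y /\<^sub>R real P) (y' /\<^sub>R real P)"
    unfolding transl_related_def
    using inj_on_image_eq_iff[OF phi_inj[OF P_nonzero] t[of "y' /\<^sub>R real P"]
        iota_image_subset[OF t[of "y /\<^sub>R real P"], of "y' /\<^sub>R real P"]]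
    by (auto simp: eq_commute)
  finally show ?thesis .
qed

lemma dilation_eq_transfer:
  assumes "y' - y \<in> L" and t: "\<And>x. t x \<subseteq> carrier (stk x)" and "dilation_eq_at t y"
    and "transl_related t y y'" "transl_related t (y /\<^sub>R real P) (y' /\<^sub>R real P)"
  shows "dilation_eq_at t y'"
  using dilation_eq_iota_image[OF assms(1-3)] assms(4,5) unfolding dilation_eq_at_def transl_related_def by simp

end

locale self_similar = periodic_dilation +
  fixes s
  assumes s_section: "coset_section stk sec H UNIV s"
    and s_dilation: "pull_m_F \<phi> (real P) s = act_F stk C s"
begin

lemma s_is_coset: "is_coset x (s x)"
  using coset_section_is_coset[OF s_section] by simp

lemma s_subset_carrier: "s x \<subseteq> carrier (stk x)"
  using is_coset_subset[OF s_is_coset] .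

lemma s_dilation_eq_at: "dilation_eq_at s y"
  using s_dilation pull_m_F_eq_act_F_iff by blast

lemma transl_related_iff_shrunk:
  assumes "l \<in> L" "y' - y = real P ^ n *\<^sub>R l"
  shows "transl_related s y y' \<longleftrightarrow> transl_related s (y /\<^sub>R real P ^ n) (y' /\<^sub>R real P ^ n)"
  using assms(2)
proof (induction n arbitrary: y y')
  case (Suc n)
  have "y' - y \<in> L"
    using Suc.prems lattice_of_nat_scaleR[OF lattice assms(1), of "P ^ Suc n"] by simp
  have "y' /\<^sub>R real P - y /\<^sub>R real P = real P ^ n *\<^sub>R l"
    using Suc.prems P_ge_2 by (simp add: scaleR_diff_right[symmetric])
  moreover have shrink: "z /\<^sub>R real P /\<^sub>R real P ^ n = z /\<^sub>R real P ^ Suc n" for z :: 'a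
    by (simp add: mult.commute)
  ultimately show ?case
    using Suc.IH transl_related_iff_scaled[OF \<open>y' - y \<in> L\<close> s_subset_carrier s_dilation_eq_at s_dilation_eq_at]
    by (simp only: shrink)
qed simp

lemma transl_related_if_shrunk_trivial:
  assumes trivial: "\<forall>l\<in>L. s (y /\<^sub>R real P ^ n + l) = H (y /\<^sub>R real P ^ n + l)" and "l \<in> L"
  shows "transl_related s y (y + real P ^ n *\<^sub>R l)"
proof -
  have "s (y /\<^sub>R real P ^ n) = H (y /\<^sub>R real P ^ n)"
    using bspec[OF trivial lattice_zero[OF lattice]] by simp
  moreover have "(y + real P ^ n *\<^sub>R l) /\<^sub>R real P ^ n = y /\<^sub>R real P ^ n + l"
    using P_ge_2 by (simp add: scaleR_add_right)
  ultimately have "transl_related s (y /\<^sub>R real P ^ n) ((y + real P ^ n *\<^sub>R l) /\<^sub>R real P ^ n)"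
    using bspec[OF trivial \<open>l \<in> L\<close>] by (simp add: transl_related_H)
  then show ?thesis
    using transl_related_iff_shrunk[OF \<open>l \<in> L\<close>, where y = y and y' = "y + real P ^ n *\<^sub>R l" and n = n] by simp
qed

lemma C_notin_H_if_shrunk_trivial:
  assumes "s (y /\<^sub>R real P) = H (y /\<^sub>R real P)" "s y \<noteq> H y"
  shows "C y \<notin> H y"
proof
  assume "C y \<in> H y"
  have "C y <#\<^bsub>stk y\<^esub> s y = H y"
    using s_dilation_eq_at[of y] assms(1) phi_image_H[OF P_nonzero, of "y /\<^sub>R real P"] P_ge_2
    unfolding dilation_eq_at_def by simp
  also have "H y = C y <#\<^bsub>stk y\<^esub> H y"
    using l_coset_H_eq_H_iff[OF C_in_carrier] \<open>C y \<in> H y\<close> by metis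
  finally have "s y = H y"
    using group.l_coset_cancel[OF group_stalk C_in_carrier s_subset_carrier H_subset_carrier] by blast
  with assms(2) show False ..
qed

lemma nontrivial_point_dilates_bad_point:
  assumes "z \<noteq> 0" "s z \<noteq> H z"
  shows "\<exists>k a. z = real P ^ k *\<^sub>R a \<and> C a \<notin> H a"
proof -
  define trivial where "trivial k \<longleftrightarrow> s (z /\<^sub>R real P ^ k) = H (z /\<^sub>R real P ^ k)" for k
  have "(\<lambda>k. z /\<^sub>R real P ^ k) \<longlonglongrightarrow> 0 *\<^sub>R z"
    using P_ge_2 by (intro tendsto_scaleR LIMSEQ_inverse_realpow_zero tendsto_const) simp
  then have "filterlim (\<lambda>k. z /\<^sub>R real P ^ k) (at 0) sequentially"
    using assms(1) P_ge_2 by (simp add: filterlim_at)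
  from eventually_compose_filterlim[OF coset_section_eventually_H[OF s_section UNIV_I] this]
  obtain k where "trivial k"
    unfolding trivial_def eventually_sequentially by blast
  then obtain m where "trivial m" and below: "\<And>j. j < m \<Longrightarrow> \<not> trivial j"
    using exists_least_iff[of trivial] by blast
  then obtain j where "m = Suc j"
    using assms(2) unfolding trivial_def by (cases m) auto
  define a where "a = z /\<^sub>R real P ^ j"
  have "s (a /\<^sub>R real P) = H (a /\<^sub>R real P)"
    using \<open>trivial m\<close> unfolding trivial_def a_def \<open>m = Suc j\<close> by (simp add: mult.commute)
  moreover have "s a \<noteq> H a"
    using below[of j] unfolding trivial_def a_def \<open>m = Suc j\<close> by simp
  ultimately have "C a \<notin> H a" by (rule C_notin_H_if_shrunk_trivial)
  moreover have "z = real P ^ j *\<^sub>R a"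
    unfolding a_def using P_ge_2 by simp
  ultimately show ?thesis by blast
qed

lemma ex_shrunk_coset_trivial:
  assumes "y \<noteq> 0"
  shows "\<exists>n. \<forall>l\<in>L. s (y /\<^sub>R real P ^ n + l) = H (y /\<^sub>R real P ^ n + l)"
proof -
  obtain F where F: "finite F" "\<And>a. C a \<notin> H a \<Longrightarrow> \<exists>f\<in>F. a - f \<in> L"
    using C_notin_H_finite_representatives by blast
  \<comment> \<open>The representative 0 accounts for the point 0 itself, which may lie in y / P^n + L.\<close>
  have "\<forall>\<^sub>F n in sequentially. \<forall>f\<in>insert 0 F. \<forall>k. y /\<^sub>R real P ^ n - real P ^ k *\<^sub>R f \<notin> L"
    using F(1) lattice_eventually_not_in_orbit[OF lattice P_ge_2 assms] by (intro eventually_ball_finite) auto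
  then obtain n where n: "\<And>f k. f \<in> insert 0 F \<Longrightarrow> y /\<^sub>R real P ^ n - real P ^ k *\<^sub>R f \<notin> L"
    unfolding eventually_sequentially by blast
  have "s (y /\<^sub>R real P ^ n + l) = H (y /\<^sub>R real P ^ n + l)" if "l \<in> L" for l
  proof (rule ccontr)
    assume nontrivial: "s (y /\<^sub>R real P ^ n + l) \<noteq> H (y /\<^sub>R real P ^ n + l)"
    show False
    proof (cases "y /\<^sub>R real P ^ n + l = 0")
      case True
      then have "y /\<^sub>R real P ^ n - real P ^ 0 *\<^sub>R 0 = - l"
        by (simp add: eq_neg_iff_add_eq_0)
      then show False using n[of 0 0] lattice_minus[OF lattice that] by simp
    next
      case False
      obtain k a where a: "y /\<^sub>R real P ^ n + l = real P ^ k *\<^sub>R a" "C a \<notin> H a"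
        using nontrivial_point_dilates_bad_point[OF False nontrivial] by blast
      obtain f where "f \<in> F" "a - f \<in> L" using F(2)[OF a(2)] by blast
      have "real P ^ k *\<^sub>R (a - f) - l \<in> L"
        using lattice_diff[OF lattice lattice_of_nat_scaleR[OF lattice \<open>a - f \<in> L\<close>, of "P ^ k"] that] by simp
      moreover have "real P ^ k *\<^sub>R (a - f) - l = y /\<^sub>R real P ^ n - real P ^ k *\<^sub>R f"
        using a(1) by (simp add: algebra_simps)
      ultimately show False using n[of f k] \<open>f \<in> F\<close> by simp
    qed
  qed
  then show ?thesis by blast
qed

lemma modification_is_coset: "is_coset x ((s(0 := \<iota> (- \<mu>) \<mu> ` s \<mu>)) x)"
  using s_is_coset is_coset_iota_image[OF s_is_coset, of \<mu> "- \<mu>"] by simp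

lemma modification_dilation:
  assumes agree: "\<And>x. x \<noteq> 0 \<Longrightarrow> t x = s x" and t: "\<And>x. t x \<subseteq> carrier (stk x)"
    and related: "\<And>y y'. y' - y \<in> L \<Longrightarrow> transl_related t y y'"
  shows "pull_m_F \<phi> (real P) t = act_F stk C t"
  unfolding pull_m_F_eq_act_F_iff
proof
  fix y
  show "dilation_eq_at t y"
  proof (cases "y = 0")
    case False
    then show ?thesis
      using s_dilation_eq_at[of y] agree[of y] agree[of "y /\<^sub>R real P"] P_ge_2
      unfolding dilation_eq_at_def by simp
  next
    case True
    obtain \<mu> where "\<mu> \<in> L" "\<mu> \<noteq> 0" using lattice_nonzero[OF lattice] by blast
    \<comment> \<open>At 0 the equation is transported from the lattice point P \<mu>, where t agrees with s.\<close>
    have "real P *\<^sub>R \<mu> \<in> L"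
      using lattice_of_nat_scaleR[OF lattice \<open>\<mu> \<in> L\<close>] by simp
    have "dilation_eq_at t (real P *\<^sub>R \<mu>)"
      using s_dilation_eq_at[of "real P *\<^sub>R \<mu>"] agree \<open>\<mu> \<noteq> 0\<close> P_ge_2 unfolding dilation_eq_at_def by simp
    moreover have "transl_related t (real P *\<^sub>R \<mu>) 0" "transl_related t \<mu> 0"
      using related lattice_minus[OF lattice] \<open>real P *\<^sub>R \<mu> \<in> L\<close> \<open>\<mu> \<in> L\<close> by simp_all
    ultimately show ?thesis
      using dilation_eq_transfer[OF _ t, where y = "real P *\<^sub>R \<mu>" and y' = 0]
        lattice_minus[OF lattice \<open>real P *\<^sub>R \<mu> \<in> L\<close>] True P_ge_2 by simp
  qed
qed

end

locale coprime_self_similar =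
  P: self_similar stk sec H \<iota> \<phi> L p A s + Q: self_similar stk sec H \<iota> \<phi> L q B s
  for stk sec H \<iota> \<phi> L p A q B s +
  assumes coprime: "coprime p q"
begin

lemma transl_related_off_0:
  assumes "y \<noteq> 0" "y' \<noteq> 0" "y' - y \<in> L"
  shows "P.transl_related s y y'"
proof -
  obtain m where m: "\<forall>l\<in>L. s (y' /\<^sub>R real p ^ m + l) = H (y' /\<^sub>R real p ^ m + l)"
    using P.ex_shrunk_coset_trivial[OF assms(2)] by blast
  obtain n where n: "\<forall>l\<in>L. s (y /\<^sub>R real q ^ n + l) = H (y /\<^sub>R real q ^ n + l)"
    using Q.ex_shrunk_coset_trivial[OF assms(1)] by blast
  have "gcd (int p ^ m) (int q ^ n) = 1"
    using coprime by simp
  then obtain a b :: int where "a * int p ^ m + b * int q ^ n = 1"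
    using bezout_int[of "int p ^ m" "int q ^ n"] by auto
  then have ab: "of_int a * real p ^ m = 1 - of_int b * real q ^ n"
    by (simp add: algebra_simps flip: of_int_eq_iff[where 'a = real])
  define l where "l = y - y'"
  have "l \<in> L"
    unfolding l_def using lattice_minus[OF P.lattice assms(3)] by simp
  \<comment> \<open>The point u is reached from y' by a p-adic step and from y by a q-adic step.\<close>
  define u where "u = y' + real p ^ m *\<^sub>R (of_int a *\<^sub>R l)"
  have "P.transl_related s y' u"
    unfolding u_def using P.transl_related_if_shrunk_trivial[OF m lattice_of_int_scaleR[OF P.lattice \<open>l \<in> L\<close>]] .
  have "u = y' + (of_int a * real p ^ m) *\<^sub>R l"
    unfolding u_def by (simp add: mult.commute)
  also have "\<dots> = y' + (1 - of_int b * real q ^ n) *\<^sub>R l"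
    by (simp only: ab)
  also have "\<dots> = y + real q ^ n *\<^sub>R (of_int (- b) *\<^sub>R l)"
    unfolding l_def by (simp add: algebra_simps)
  finally have "P.transl_related s y u"
    using Q.transl_related_if_shrunk_trivial[OF n lattice_of_int_scaleR[OF P.lattice \<open>l \<in> L\<close>]] by (simp only:)
  then show ?thesis
    using P.transl_related_trans[OF P.s_subset_carrier _ P.transl_related_sym[OF P.s_subset_carrier \<open>P.transl_related s y' u\<close>]]
    by blast
qed

lemma modification_transl_related:
  assumes "\<mu> \<in> L" "\<mu> \<noteq> 0" "y' - y \<in> L"
  shows "P.transl_related (s(0 := \<iota> (- \<mu>) \<mu> ` s \<mu>)) y y'"
proof -
  define s' where "s' = s(0 := \<iota> (- \<mu>) \<mu> ` s \<mu>)"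
  have carrier: "s' x \<subseteq> carrier (stk x)" for x
    unfolding s'_def using P.is_coset_subset[OF P.modification_is_coset] .
  have off_0: "P.transl_related s' z z'" if "z \<noteq> 0" "z' \<noteq> 0" "z' - z \<in> L" for z z'
    using transl_related_off_0[OF that] that unfolding s'_def P.transl_related_def by simp
  have "P.transl_related s' \<mu> 0"
    unfolding s'_def P.transl_related_def using \<open>\<mu> \<noteq> 0\<close> by simp
  then have from_0: "P.transl_related s' 0 z" if "z \<in> L" for z
  proof (cases "z = 0")
    case False
    have "z - \<mu> \<in> L" using lattice_diff[OF P.lattice that \<open>\<mu> \<in> L\<close>] .
    then show ?thesis
      by (rule P.transl_related_trans[of s' 0 \<mu> z, OF carrier
          P.transl_related_sym[of s' \<mu> 0, OF carrier \<open>P.transl_related s' \<mu> 0\<close>]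
          off_0[OF \<open>\<mu> \<noteq> 0\<close> False]])
  qed (simp add: P.transl_related_refl carrier)
  have "P.transl_related s' y y'"
  proof (cases "y = 0")
    case True
    then show ?thesis using from_0[of y'] assms(3) by simp
  next
    case False
    show ?thesis
    proof (cases "y' = 0")
      case True
      then have "y \<in> L" using lattice_minus[OF P.lattice assms(3)] by simp
      then show ?thesis using P.transl_related_sym[of s' 0 y, OF carrier from_0] True by simp
    next
      case False
      then show ?thesis using off_0 \<open>y \<noteq> 0\<close> assms(3) by blast
    qed
  qed
  then show ?thesis unfolding s'_def .
qed

end

theorem theorem2p2:
  fixes stk :: "'v::euclidean_space \<Rightarrow> 'g monoid"
    and sec :: "'v set \<Rightarrow> ('v \<Rightarrow> 'g) \<Rightarrow> bool"
    and H :: "'v \<Rightarrow> 'g set"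
    and \<iota> :: "'v \<Rightarrow> 'v \<Rightarrow> 'g \<Rightarrow> 'g"
    and \<phi> :: "real \<Rightarrow> 'v \<Rightarrow> 'g \<Rightarrow> 'g"
    and L :: "'v set" and p q :: nat
    and s :: "'v \<Rightarrow> 'g set" and A B :: "'v \<Rightarrow> 'g"
  assumes eq: "equivariant_coset_sheaf stk sec H \<iota> \<phi>"
    and lat: "lattice L"
    and pq: "p \<ge> 2" "q \<ge> 2" "coprime p q"
    and s: "coset_section stk sec H UNIV s"
    and A: "sec UNIV A" "\<forall>l\<in>L. pull_t_G \<iota> l A = A"
    and B: "sec UNIV B" "\<forall>l\<in>L. pull_t_G \<iota> l B = B"
    and sA: "pull_m_F \<phi> (real p) s = act_F stk A s"
    and sB: "pull_m_F \<phi> (real q) s = act_F stk B s"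
  shows "\<exists>s'. coset_section stk sec H UNIV s' \<and> (\<forall>x. x \<noteq> 0 \<longrightarrow> s' x = s x) \<and>
           (\<forall>l\<in>L. pull_t_F \<iota> l s' = s') \<and>
           pull_m_F \<phi> (real p) s' = act_F stk A s' \<and>
           pull_m_F \<phi> (real q) s' = act_F stk B s'"
proof -
  interpret coprime_self_similar stk sec H \<iota> \<phi> L p A q B s
    by unfold_locales (use eq lat pq s A B sA sB in auto)
  obtain \<mu> where \<mu>: "\<mu> \<in> L" "\<mu> \<noteq> 0"
    using lattice_nonzero[OF lat] by blast
  define s' where "s' = s(0 := \<iota> (- \<mu>) \<mu> ` s \<mu>)"
  have coset: "P.is_coset x (s' x)" for x
    unfolding s'_def by (rule P.modification_is_coset)
  have carrier: "s' x \<subseteq> carrier (stk x)" for x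
    using P.is_coset_subset[OF coset] .
  have agree: "\<forall>x. x \<noteq> 0 \<longrightarrow> s' x = s x"
    unfolding s'_def by simp
  have related: "P.transl_related s' y y'" if "y' - y \<in> L" for y y'
    unfolding s'_def using modification_transl_related[OF \<mu> that] .
  have "coset_section stk sec H UNIV s'"
    using P.coset_section_update[OF s coset[of 0]] unfolding s'_def by simp
  moreover have "\<forall>l\<in>L. pull_t_F \<iota> l s' = s'"
    using related P.pull_t_F_eq_iff by simp
  moreover have "pull_m_F \<phi> (real p) s' = act_F stk A s'"
    using P.modification_dilation agree carrier related by blast
  moreover have "pull_m_F \<phi> (real q) s' = act_F stk B s'"
    using Q.modification_dilation agree carrier related by blast
  ultimately show ?thesis
    using agree by blast
qed

end
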